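(* Fix $\hat\Sigma\in\mathbb{P}_d$ and $\alpha>0$. Define $\mathcal{B}_R(\hat\Sigma;\alpha)=\{A\in\mathbb{P}_d:\delta_R(A,\hat\Sigma)\le\alpha\}$ and, for $\rho>0$, $\mathcal{B}_S(\hat\Sigma;\rho)=\{A\in\mathbb{P}_d:\delta_S^2(A,\hat\Sigma)\le\rho\}$. Then $\mathcal{B}_R(\hat\Sigma;\alpha)\subseteq\mathcal{B}_S(\hat\Sigma;C\alpha)$ for every $C\ge\alpha/8$.
   Context: $\mathbb{P}_d$ denotes the set of real symmetric $d\times d$ positive definite matrices. The Riemannian distance is $\delta_R(A,B)=\|\log(A^{-1/2}BA^{-1/2})\|_F$ (matrix logarithm, Frobenius norm). The S-divergence is $\delta_S^2(A,B)=\log\det\left(\frac{A+B}{2}\right)-\frac12\log\det(AB)$, and $\delta_S=\sqrt{\delta_S^2}$. *)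

theory Defs
  imports "HOL-Analysis.Analysis"
begin

text \<open>Real symmetric positive definite matrices (the set P_d, d = CARD('n)).\<close>
definition posdef :: "real^'n^'n \<Rightarrow> bool" where
  "posdef A \<longleftrightarrow> transpose A = A \<and> (\<forall>x. x \<noteq> 0 \<longrightarrow> x \<bullet> (A *v x) > 0)"

fun matpow :: "real^'n^'n \<Rightarrow> nat \<Rightarrow> real^'n^'n" where
  "matpow L 0 = mat 1"
| "matpow L (Suc k) = L ** matpow L k"

definition mexp :: "real^'n^'n \<Rightarrow> real^'n^'n" where
  "mexp L = (\<Sum>k. (1 / fact k) *\<^sub>R matpow L k)"

definition mlog :: "real^'n^'n \<Rightarrow> real^'n^'n" where
  "mlog M = (THE L. transpose L = L \<and> mexp L = M)"

definition msqrt :: "real^'n^'n \<Rightarrow> real^'n^'n" where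
  "msqrt A = (THE S. posdef S \<and> S ** S = A)"

definition minvsqrt :: "real^'n^'n \<Rightarrow> real^'n^'n" where
  "minvsqrt A = matrix_inv (msqrt A)"

text \<open>Riemannian distance; norm on real^'n^'n is the Frobenius norm.\<close>
definition deltaR :: "real^'n^'n \<Rightarrow> real^'n^'n \<Rightarrow> real" where
  "deltaR A B = norm (mlog (minvsqrt A ** B ** minvsqrt A))"

definition deltaS2 :: "real^'n^'n \<Rightarrow> real^'n^'n \<Rightarrow> real" where
  "deltaS2 A B = ln (det ((1/2) *\<^sub>R (A + B))) - (1/2) * ln (det (A ** B))"

definition ballR :: "real^'n^'n \<Rightarrow> real \<Rightarrow> (real^'n^'n) set" where
  "ballR S \<alpha> = {A. posdef A \<and> deltaR A S \<le> \<alpha>}"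

definition ballS :: "real^'n^'n \<Rightarrow> real \<Rightarrow> (real^'n^'n) set" where
  "ballS S \<rho> = {A. posdef A \<and> deltaS2 A S \<le> \<rho>}"

end

theory Submission
  imports Defs "HOL-Probability.Hoeffding"
begin

text \<open>
  Write A^(-1/2) B A^(-1/2) = Q diag(exp t) Q^T with Q orthogonal, so that the Riemannian
  distance is the Euclidean norm of t. The S-divergence is invariant under congruences
  X \<mapsto> M X M^T, and M = A^(1/2) Q maps the pair (I, diag(exp t)) to (A, B); hence
  \<delta>_S^2(A, B) = \<Sum>_i ln cosh (t_i / 2) \<le> \<Sum>_i t_i^2 / 8 = \<delta>_R(A, B)^2 / 8,
  which is at most \<alpha>^2 / 8 \<le> C \<alpha> on the Riemannian ball.
  The matrix square root and logarithm are specified as unique solutions of equations, so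
  evaluating them on an orthogonal diagonalisation needs the spectral theorem for symmetric
  matrices, obtained here by maximising the Rayleigh quotient.
\<close>

lemma matrix_add_rdistrib: "(A + B) ** C = A ** C + B ** C"
  by (vector matrix_matrix_mult_def sum.distrib[symmetric] field_simps)

lemma transpose_add: "transpose (A + B) = transpose A + transpose B"
  by (simp add: transpose_def vec_eq_iff)

lemma vector_power_nth: "(a ^ k) $ i = a $ i ^ k"
  by (induction k) (simp_all add: one_vec_def)

lemma inner_matrix_vector_transpose:
  fixes A :: "real^'n^'m"
  shows "x \<bullet> (A *v y) = (transpose A *v x) \<bullet> y"
  by (simp add: dot_lmul_matrix)

lemma inner_symmetric_matrix_vector:
  fixes A :: "real^'n^'n"
  assumes "transpose A = A"
  shows "x \<bullet> (A *v y) = (A *v x) \<bullet> y"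
  using inner_matrix_vector_transpose[of x A y] unfolding assms .

lemma power2_norm_matrix:
  "(norm (M :: real^'n^'m))\<^sup>2 = (\<Sum>i\<in>UNIV. \<Sum>j\<in>UNIV. (M $ i $ j)\<^sup>2)"
  by (simp add: norm_vec_def L2_set_def sum_nonneg)

lemma norm_transpose: "norm (transpose (M :: real^'n^'m)) = norm M"
proof -
  have "(norm (transpose M))\<^sup>2 = (norm M)\<^sup>2"
    unfolding power2_norm_matrix transpose_def by (simp, subst sum.swap, rule refl)
  thus ?thesis by (simp add: power2_eq_iff_nonneg)
qed

lemma matrix_inv:
  fixes A :: "real^'n^'n"
  assumes "invertible A"
  shows "A ** matrix_inv A = mat 1" "matrix_inv A ** A = mat 1"
  using someI_ex[OF assms[unfolded invertible_def]] by (simp_all add: matrix_inv_def)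

lemma symmetric_matrix_inv:
  fixes A :: "real^'n^'n"
  assumes "transpose A = A" "invertible A"
  shows "transpose (matrix_inv A) = matrix_inv A"
proof -
  have "transpose (matrix_inv A) = transpose (matrix_inv A) ** (A ** matrix_inv A)"
    using matrix_inv(1)[OF assms(2)] by simp
  also have "\<dots> = transpose (A ** matrix_inv A) ** matrix_inv A"
    using assms(1) by (simp add: matrix_transpose_mul matrix_mul_assoc)
  finally show ?thesis using matrix_inv(1)[OF assms(2)] by simp
qed

lemma invertible_orthogonal_matrix: "orthogonal_matrix P \<Longrightarrow> invertible P"
  unfolding invertible_def orthogonal_matrix_def by blast

section \<open>Diagonal matrices and orthogonal conjugation\<close>

definition diag_mat :: "'a::zero^'n \<Rightarrow> 'a^'n^'n" where
  "diag_mat d = (\<chi> i j. if i = j then d $ i else 0)"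

lemma diag_mat_mult_left_nth:
  "(diag_mat a ** M) $ i $ j = a $ i * M $ i $ j"
  unfolding matrix_matrix_mult_def diag_mat_def
  by (auto simp: if_distrib if_distribR sum.delta cong: if_cong)

lemma diag_mat_mult_right_nth:
  "(M ** diag_mat a) $ i $ j = M $ i $ j * a $ j"
  unfolding matrix_matrix_mult_def diag_mat_def
  by (auto simp: if_distrib if_distribR sum.delta' cong: if_cong)

lemma diag_mat_mult: "diag_mat a ** diag_mat b = diag_mat (a * b)"
  by (simp add: vec_eq_iff diag_mat_mult_left_nth) (simp add: diag_mat_def)

lemma diag_mat_one: "diag_mat 1 = mat 1"
  by (simp add: diag_mat_def mat_def one_vec_def vec_eq_iff)

lemma diag_mat_add: "diag_mat (a + b) = diag_mat a + diag_mat (b :: 'a::monoid_add^'n)"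
  by (simp add: diag_mat_def vec_eq_iff)

lemma diag_mat_scaleR: "diag_mat (c *\<^sub>R a) = c *\<^sub>R diag_mat a"
  by (simp add: diag_mat_def vec_eq_iff)

lemma transpose_diag_mat [simp]: "transpose (diag_mat a) = diag_mat a"
  by (simp add: diag_mat_def transpose_def vec_eq_iff)

lemma det_diag_mat: "det (diag_mat a) = (\<Prod>i\<in>UNIV. a $ i)"
  by (subst det_diagonal) (auto simp: diag_mat_def)

lemma norm_diag_mat: "norm (diag_mat a) = norm (a :: real^'n)"
proof -
  have "diag_mat a $ i = axis i (a $ i)" for i
    by (auto simp: diag_mat_def axis_def vec_eq_iff)
  hence "norm (diag_mat a $ i) = norm (a $ i)" for i
    by (simp add: norm_eq_sqrt_inner inner_axis_axis)
  thus ?thesis by (simp add: norm_vec_def)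
qed

lemma inner_diag_mat: "x \<bullet> (diag_mat a *v x) = (\<Sum>i\<in>UNIV. a $ i * (x $ i)\<^sup>2)"
  by (simp add: inner_vec_def matrix_vector_mult_def diag_mat_def if_distrib if_distribR
      power2_eq_square mult_ac cong: if_cong)

lemma norm_orthogonal_matrix_vector:
  fixes P :: "real^'n^'n"
  assumes "orthogonal_matrix P"
  shows "norm (P *v x) = norm x"
proof -
  have "(P *v x) \<bullet> (P *v x) = ((transpose P ** P) *v x) \<bullet> x"
    by (simp only: inner_matrix_vector_transpose[of "P *v x"] matrix_vector_mul_assoc)
  thus ?thesis using assms by (simp add: orthogonal_matrix_def norm_eq)
qed

lemma norm_matrix_mult_orthogonal_transpose:
  fixes P :: "real^'n^'n" and M :: "real^'n^'m"
  assumes "orthogonal_matrix P"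
  shows "norm (M ** transpose P) = norm M"
proof -
  have "(M ** transpose P) $ i = P *v (M $ i)" for i
    by (simp add: matrix_matrix_mult_def matrix_vector_mult_def transpose_def vec_eq_iff mult.commute)
  thus ?thesis
    unfolding norm_vec_def[of "M ** transpose P"] norm_vec_def[of M]
    by (simp add: norm_orthogonal_matrix_vector[OF assms])
qed

lemma norm_orthogonal_conj:
  fixes P D :: "real^'n^'n"
  assumes "orthogonal_matrix P"
  shows "norm (P ** D ** transpose P) = norm D"
proof -
  have "norm (P ** D ** transpose P) = norm (P ** D)"
    by (rule norm_matrix_mult_orthogonal_transpose[OF assms])
  also have "\<dots> = norm (transpose D ** transpose P)"
    by (metis matrix_transpose_mul norm_transpose)
  finally show ?thesis using assms by (simp add: norm_matrix_mult_orthogonal_transpose norm_transpose)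
qed

lemma det_orthogonal_conj:
  fixes P D :: "real^'n^'n"
  assumes "orthogonal_matrix P"
  shows "det (P ** D ** transpose P) = det D"
proof -
  have "det P * det (transpose P) = 1"
    using assms by (metis det_I det_mul orthogonal_matrix_def)
  thus ?thesis by (simp add: det_mul)
qed

lemma orthogonal_conj_mult:
  fixes P D E :: "real^'n^'n"
  assumes "orthogonal_matrix P"
  shows "(P ** D ** transpose P) ** (P ** E ** transpose P) = P ** (D ** E) ** transpose P"
proof -
  have "(P ** D ** transpose P) ** (P ** E ** transpose P)
      = P ** (D ** (transpose P ** P) ** E) ** transpose P"
    by (simp add: matrix_mul_assoc)
  thus ?thesis using assms by (simp add: orthogonal_matrix_def)
qed

lemma matpow_orthogonal_conj:
  fixes P D :: "real^'n^'n"
  assumes "orthogonal_matrix P"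
  shows "matpow (P ** D ** transpose P) k = P ** matpow D k ** transpose P"
proof (induction k)
  case 0
  show ?case using assms by (simp add: orthogonal_matrix_def)
next
  case (Suc k)
  thus ?case by (simp add: orthogonal_conj_mult[OF assms])
qed

lemma matpow_diag_mat: "matpow (diag_mat a) k = diag_mat (a ^ k)"
  by (induction k) (simp_all add: diag_mat_one diag_mat_mult)

lemma bounded_linear_orthogonal_conj_diag:
  fixes P :: "real^'n^'n"
  shows "bounded_linear (\<lambda>v. P ** diag_mat v ** transpose P)"
  unfolding linear_conv_bounded_linear[symmetric] by (intro linearI)
    (simp_all add: diag_mat_add diag_mat_scaleR matrix_add_ldistrib matrix_add_rdistrib
      matrix_scalar_ac scalar_matrix_assoc)

lemma mexp_orthogonal_conj_diag:
  fixes P :: "real^'n^'n"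
  assumes "orthogonal_matrix P"
  shows "mexp (P ** diag_mat a ** transpose P) = P ** diag_mat (\<chi> i. exp (a $ i)) ** transpose P"
proof -
  have "(\<lambda>k. (1 / fact k) *\<^sub>R a ^ k) sums (\<chi> i. exp (a $ i))"
    unfolding sums_def
  proof (rule vec_tendstoI)
    fix i
    show "(\<lambda>n. (\<Sum>k<n. (1 / fact k) *\<^sub>R a ^ k) $ i)
        \<longlonglongrightarrow> (\<chi> i. exp (a $ i)) $ i"
      using exp_converges[of "a $ i"] by (simp add: sums_def vector_power_nth divide_inverse_commute)
  qed
  from bounded_linear.sums[OF bounded_linear_orthogonal_conj_diag this, of P]
  show ?thesis
    unfolding mexp_def matpow_orthogonal_conj[OF assms] matpow_diag_mat
    by (simp add: sums_iff diag_mat_scaleR matrix_scalar_ac scalar_matrix_assoc)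
qed

lemma orthogonal_conj_diag_eq_if_map_eq:
  fixes P Q :: "real^'n^'n"
  assumes P: "orthogonal_matrix P" and Q: "orthogonal_matrix Q"
    and separates: "\<And>i j. f (a $ i) = f (b $ j) \<Longrightarrow> a $ i = b $ j"
    and eq: "P ** diag_mat (\<chi> i. f (a $ i)) ** transpose P
           = Q ** diag_mat (\<chi> i. f (b $ i)) ** transpose Q"
  shows "P ** diag_mat a ** transpose P = Q ** diag_mat b ** transpose Q"
proof -
  define R where "R = transpose P ** Q"
  have PR: "P ** R = Q"
    using P by (simp add: R_def matrix_mul_assoc orthogonal_matrix_def)
  have RQ: "R ** transpose Q = transpose P"
    using Q by (simp add: R_def orthogonal_matrix_def flip: matrix_mul_assoc)
  have "diag_mat (\<chi> i. f (a $ i)) ** R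
      = transpose P ** (P ** diag_mat (\<chi> i. f (a $ i)) ** transpose P) ** Q"
    using P by (simp add: R_def matrix_mul_assoc orthogonal_matrix_def)
  also have "\<dots> = transpose P ** (Q ** diag_mat (\<chi> i. f (b $ i)) ** transpose Q) ** Q"
    by (simp only: eq)
  also have "\<dots> = R ** diag_mat (\<chi> i. f (b $ i))"
    using Q by (simp add: R_def orthogonal_matrix_def flip: matrix_mul_assoc)
  finally have intertwines_f:
    "diag_mat (\<chi> i. f (a $ i)) ** R = R ** diag_mat (\<chi> i. f (b $ i))" .
  have "f (a $ i) * R $ i $ j = R $ i $ j * f (b $ j)" for i j
    using arg_cong[OF intertwines_f, of "\<lambda>M. M $ i $ j"]
    by (simp add: diag_mat_mult_left_nth diag_mat_mult_right_nth)
  hence "R $ i $ j = 0 \<or> a $ i = b $ j" for i j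
    using separates[of i j] by (auto simp: mult.commute)
  hence intertwines: "diag_mat a ** R = R ** diag_mat b"
    by (auto simp: vec_eq_iff diag_mat_mult_left_nth diag_mat_mult_right_nth mult.commute)
  have "P ** diag_mat a ** transpose P = P ** (diag_mat a ** R) ** transpose Q"
    by (simp add: RQ flip: matrix_mul_assoc)
  also have "\<dots> = P ** (R ** diag_mat b) ** transpose Q"
    by (simp only: intertwines)
  also have "\<dots> = Q ** diag_mat b ** transpose Q"
    by (simp add: PR matrix_mul_assoc)
  finally show ?thesis .
qed

section \<open>The spectral theorem for symmetric matrices\<close>

lemma linear_coeff_eq_0_if_quadratic_nonpos:
  fixes c d :: real
  assumes "\<And>s. 2 * s * c + s\<^sup>2 * d \<le> 0"
  shows "c = 0"
proof (rule ccontr)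
  assume "c \<noteq> 0"
  define e where "e = \<bar>d\<bar> + 1"
  have "e > 0" by (simp add: e_def)
  define s where "s = c / e"
  have "2 * s * c + s\<^sup>2 * d = c\<^sup>2 * (2 * e + d) / e\<^sup>2"
    using \<open>e > 0\<close> by (simp add: s_def field_simps power2_eq_square)
  also have "\<dots> > 0"
    using \<open>c \<noteq> 0\<close> \<open>e > 0\<close> by (intro divide_pos_pos mult_pos_pos) (auto simp: e_def)
  finally show False using assms[of s] by simp
qed

lemma symmetric_matrix_eigenvector_in_invariant_subspace:
  fixes A :: "real^'n^'n"
  assumes sym: "transpose A = A" and S: "subspace S" and "x \<in> S" "x \<noteq> 0"
    and invariant: "\<And>y. y \<in> S \<Longrightarrow> A *v y \<in> S"
  obtains v l where "v \<in> S" "norm v = 1" "A *v v = l *\<^sub>R v"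
proof -
  define f where "f y = y \<bullet> (A *v y)" for y
  define K where "K = sphere 0 1 \<inter> S"
  have "compact K"
    unfolding K_def using S by (intro compact_Int_closed closed_subspace) auto
  moreover have "x /\<^sub>R norm x \<in> K"
    unfolding K_def using assms by (auto simp: subspace_scale)
  moreover have "continuous_on K f"
    unfolding f_def by (intro continuous_intros linear_continuous_on matrix_vector_mul_linear)
  ultimately obtain v where "v \<in> K" and v_max: "\<And>y. y \<in> K \<Longrightarrow> f y \<le> f v"
    using continuous_attains_sup[of K f] by blast
  hence vS: "v \<in> S" and v1: "v \<bullet> v = 1" by (auto simp: K_def norm_eq_1)
  define l where "l = f v"
  have Rayleigh: "f y \<le> l * (y \<bullet> y)" if "y \<in> S" for y
  proof (cases "y = 0")
    case False
    have "y /\<^sub>R norm y \<in> K" unfolding K_def using that S False by (auto simp: subspace_scale)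
    moreover have "f (y /\<^sub>R norm y) = f y / (norm y)\<^sup>2"
      by (simp add: f_def matrix_vector_mult_scaleR power2_eq_square field_simps)
    ultimately have "f y / (norm y)\<^sup>2 \<le> l"
      using v_max unfolding l_def by metis
    thus ?thesis using False by (simp add: divide_le_eq power2_norm_eq_inner mult.commute)
  qed (simp add: f_def)
  define u where "u = A *v v - l *\<^sub>R v"
  have uS: "u \<in> S"
    unfolding u_def using S invariant vS by (intro subspace_diff subspace_scale) auto
  have vAu: "v \<bullet> (A *v u) = u \<bullet> (A *v v)"
    using inner_symmetric_matrix_vector[OF sym, of v u] by (simp add: inner_commute)
  have uu: "u \<bullet> u = u \<bullet> (A *v v) - l * (u \<bullet> v)"
    by (simp add: u_def inner_diff_right)
  \<comment> \<open>Along the line v + s u the Rayleigh bound becomes a quadratic inequality in s whose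
    linear coefficient is u \<bullet> u, so u = 0.\<close>
  have "2 * s * (u \<bullet> u) + s\<^sup>2 * (f u - l * (u \<bullet> u)) \<le> 0" for s
  proof -
    have "f (v + s *\<^sub>R u) \<le> l * ((v + s *\<^sub>R u) \<bullet> (v + s *\<^sub>R u))"
      using S vS uS by (intro Rayleigh subspace_add subspace_scale) auto
    thus ?thesis
      by (simp add: f_def l_def uu v1 vAu matrix_vector_right_distrib matrix_vector_mult_scaleR
          inner_add_left inner_add_right inner_commute power2_eq_square algebra_simps)
  qed
  hence "u \<bullet> u = 0" by (rule linear_coeff_eq_0_if_quadratic_nonpos)
  hence "A *v v = l *\<^sub>R v" by (simp add: u_def)
  thus thesis using that vS v1 by (simp add: norm_eq_1)
qed

definition orthonormal_eigenset :: "real^'n^'n \<Rightarrow> (real^'n) set \<Rightarrow> bool" where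
  "orthonormal_eigenset A B \<longleftrightarrow>
     pairwise orthogonal B \<and> (\<forall>b\<in>B. norm b = 1 \<and> (\<exists>l. A *v b = l *\<^sub>R b))"

lemma orthonormal_eigenset_independent: "orthonormal_eigenset A B \<Longrightarrow> independent B"
  unfolding orthonormal_eigenset_def by (intro pairwise_orthogonal_independent) auto

lemma orthonormal_eigenset_card_le:
  assumes "orthonormal_eigenset A (B :: (real^'n) set)"
  shows "finite B" "card B \<le> CARD('n)"
  using independent_bound[OF orthonormal_eigenset_independent[OF assms]] by simp_all

lemma orthonormal_eigenset_extend:
  fixes A :: "real^'n^'n"
  assumes sym: "transpose A = A" and B: "orthonormal_eigenset A B" and "card B < CARD('n)"
  obtains v where "v \<notin> B" "orthonormal_eigenset A (insert v B)"
proof -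
  define S where "S = {z. \<forall>b\<in>B. b \<bullet> z = 0}"
  have "subspace S" unfolding S_def subspace_def by (auto simp: inner_add_right)
  have "dim B < DIM(real^'n)"
    using \<open>card B < CARD('n)\<close> orthonormal_eigenset_independent[OF B]
    by (simp add: dim_eq_card_independent)
  then obtain x where "x \<noteq> 0" and "\<And>y. y \<in> span B \<Longrightarrow> orthogonal x y"
    using orthogonal_to_subspace_exists by blast
  hence "x \<in> S" unfolding S_def by (auto simp: orthogonal_def inner_commute span_base)
  have "A *v z \<in> S" if "z \<in> S" for z
  proof -
    have "b \<bullet> (A *v z) = 0" if "b \<in> B" for b
    proof -
      obtain l where "A *v b = l *\<^sub>R b"
        using B \<open>b \<in> B\<close> by (auto simp: orthonormal_eigenset_def)
      hence "b \<bullet> (A *v z) = l * (b \<bullet> z)"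
        by (simp add: inner_symmetric_matrix_vector[OF sym])
      thus ?thesis using \<open>z \<in> S\<close> \<open>b \<in> B\<close> by (simp add: S_def)
    qed
    thus ?thesis by (simp add: S_def)
  qed
  then obtain v l where "v \<in> S" "norm v = 1" "A *v v = l *\<^sub>R v"
    using symmetric_matrix_eigenvector_in_invariant_subspace[OF sym \<open>subspace S\<close> \<open>x \<in> S\<close>]
      \<open>x \<noteq> 0\<close> by blast
  show thesis
  proof
    show "v \<notin> B" using \<open>v \<in> S\<close> \<open>norm v = 1\<close> by (auto simp: S_def norm_eq_1)
    show "orthonormal_eigenset A (insert v B)"
      using B \<open>v \<in> S\<close> \<open>norm v = 1\<close> \<open>A *v v = l *\<^sub>R v\<close>
      by (auto simp: orthonormal_eigenset_def pairwise_insert S_def orthogonal_def inner_commute)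
  qed
qed

lemma symmetric_matrix_orthonormal_eigenbasis:
  fixes A :: "real^'n^'n"
  assumes "transpose A = A"
  obtains B where "orthonormal_eigenset A B" "card B = CARD('n)"
proof -
  obtain B where B: "orthonormal_eigenset A B"
    and B_max: "\<And>B'. orthonormal_eigenset A B' \<Longrightarrow> card B' \<le> card B"
    using ex_has_greatest_nat[of "orthonormal_eigenset A" "{}" card "CARD('n) + 1"]
      orthonormal_eigenset_card_le(2) by (force simp: orthonormal_eigenset_def)
  have "card B = CARD('n)"
  proof (rule ccontr)
    assume "card B \<noteq> CARD('n)"
    hence "card B < CARD('n)" using orthonormal_eigenset_card_le(2)[OF B] by simp
    then obtain v where "v \<notin> B" "orthonormal_eigenset A (insert v B)"
      using orthonormal_eigenset_extend[OF assms B] by blast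
    thus False using B_max[of "insert v B"] orthonormal_eigenset_card_le(1)[OF B] by simp
  qed
  thus thesis using that B by blast
qed

theorem symmetric_matrix_orthogonal_diagonalization:
  fixes A :: "real^'n^'n"
  assumes "transpose A = A"
  obtains P a where "orthogonal_matrix P" "A = P ** diag_mat a ** transpose P"
proof -
  obtain B where B: "orthonormal_eigenset A B" and card_B: "card B = CARD('n)"
    using symmetric_matrix_orthonormal_eigenbasis[OF assms] by blast
  obtain g where g: "bij_betw g (UNIV :: 'n set) B"
    using finite_same_card_bij[of "UNIV :: 'n set" B] orthonormal_eigenset_card_le(1)[OF B] card_B by auto
  define P :: "real^'n^'n" where "P = (\<chi> i j. g j $ i)"
  define a :: "real^'n" where "a = (\<chi> j. g j \<bullet> (A *v g j))"
  have gB: "g j \<in> B" for j using g by (auto simp: bij_betw_def)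
  have column_P: "column j P = g j" for j by (simp add: P_def column_def)
  have "orthogonal (g i) (g j)" if "i \<noteq> j" for i j
  proof -
    have "g i \<noteq> g j" using g that by (auto simp: bij_betw_def inj_def)
    thus ?thesis using B gB by (auto simp: orthonormal_eigenset_def pairwise_def)
  qed
  hence "orthogonal_matrix P"
    unfolding orthogonal_matrix_orthonormal_columns column_P
    using B gB by (auto simp: orthonormal_eigenset_def)
  have eigen: "A *v g j = a $ j *\<^sub>R g j" for j
  proof -
    obtain l where "A *v g j = l *\<^sub>R g j" "norm (g j) = 1"
      using B gB[of j] by (auto simp: orthonormal_eigenset_def)
    thus ?thesis by (simp add: a_def norm_eq_1)
  qed
  have "A ** P = P ** diag_mat a"
  proof -
    have "(A ** P) $ i $ j = (A *v g j) $ i" for i j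
      by (simp add: P_def matrix_matrix_mult_def matrix_vector_mult_def)
    thus ?thesis by (simp add: vec_eq_iff eigen diag_mat_mult_right_nth P_def mult.commute)
  qed
  hence "A = P ** diag_mat a ** transpose P"
    using \<open>orthogonal_matrix P\<close>
    by (metis matrix_mul_assoc matrix_mul_rid orthogonal_matrix_def)
  with \<open>orthogonal_matrix P\<close> show thesis by (rule that)
qed

section \<open>Positive definite matrices, their square roots and logarithms\<close>

lemma posdef_congruence:
  fixes B M :: "real^'n^'n"
  assumes B: "posdef B" and M: "invertible M"
  shows "posdef (transpose M ** B ** M)"
  unfolding posdef_def
proof (intro conjI allI impI)
  show "transpose (transpose M ** B ** M) = transpose M ** B ** M"
    using B by (simp add: posdef_def matrix_transpose_mul matrix_mul_assoc)
  fix x :: "real^'n"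
  assume "x \<noteq> 0"
  hence "M *v x \<noteq> 0"
    using M inj_matrix_vector_mult[OF M] by (metis inj_eq matrix_vector_mult_0_right)
  hence "0 < (M *v x) \<bullet> (B *v (M *v x))"
    using B by (simp add: posdef_def)
  also have "\<dots> = x \<bullet> (transpose M *v (B *v (M *v x)))"
    using inner_matrix_vector_transpose[of x "transpose M"] by (simp only: transpose_transpose)
  also have "\<dots> = x \<bullet> ((transpose M ** B ** M) *v x)"
    by (simp only: matrix_vector_mul_assoc matrix_mul_assoc)
  finally show "0 < x \<bullet> ((transpose M ** B ** M) *v x)" .
qed

lemma posdef_congruence_iff:
  fixes B M :: "real^'n^'n"
  assumes "invertible M"
  shows "posdef (transpose M ** B ** M) \<longleftrightarrow> posdef B"
proof
  obtain N where MN: "M ** N = mat 1" and "N ** M = mat 1"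
    using assms by (auto simp: invertible_def)
  hence "invertible N" by (auto simp: invertible_def)
  assume "posdef (transpose M ** B ** M)"
  have "transpose N ** (transpose M ** B ** M) ** N = transpose (M ** N) ** B ** (M ** N)"
    by (simp add: matrix_transpose_mul matrix_mul_assoc)
  with posdef_congruence[OF \<open>posdef (transpose M ** B ** M)\<close> \<open>invertible N\<close>]
  show "posdef B" by (simp add: MN)
qed (rule posdef_congruence[OF _ assms])

lemma posdef_orthogonal_conj_iff:
  fixes P D :: "real^'n^'n"
  assumes "orthogonal_matrix P"
  shows "posdef (P ** D ** transpose P) \<longleftrightarrow> posdef D"
  using posdef_congruence_iff[of "transpose P" D] assms
  by (simp add: invertible_orthogonal_matrix)

lemma posdef_diag_mat_iff: "posdef (diag_mat (a :: real^'n)) \<longleftrightarrow> (\<forall>i. 0 < a $ i)"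
proof
  assume pos: "posdef (diag_mat a)"
  show "\<forall>i. 0 < a $ i"
  proof
    fix i
    have "0 < axis i 1 \<bullet> (diag_mat a *v axis i (1::real))"
      using pos by (simp add: posdef_def axis_eq_0_iff)
    thus "0 < a $ i"
      by (simp add: inner_diag_mat axis_def if_distrib if_distribR cong: if_cong)
  qed
next
  assume pos: "\<forall>i. 0 < a $ i"
  show "posdef (diag_mat a)"
    unfolding posdef_def
  proof (intro conjI allI impI)
    show "transpose (diag_mat a) = diag_mat a" by simp
    fix x :: "real^'n"
    assume "x \<noteq> 0"
    then obtain k where "x $ k \<noteq> 0" by (auto simp: vec_eq_iff)
    hence "0 < a $ k * (x $ k)\<^sup>2" using pos by simp
    also have "\<dots> \<le> (\<Sum>i\<in>UNIV. a $ i * (x $ i)\<^sup>2)"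
      using pos by (intro member_le_sum mult_nonneg_nonneg) (auto intro: less_imp_le)
    finally show "0 < x \<bullet> (diag_mat a *v x)" by (simp add: inner_diag_mat)
  qed
qed

lemma posdef_diagonalization:
  fixes S :: "real^'n^'n"
  assumes "posdef S"
  obtains P a where "orthogonal_matrix P" "S = P ** diag_mat a ** transpose P" "\<And>i. 0 < a $ i"
proof -
  obtain P a where P: "orthogonal_matrix P" and S: "S = P ** diag_mat a ** transpose P"
    using symmetric_matrix_orthogonal_diagonalization assms by (auto simp: posdef_def)
  have "\<forall>i. 0 < a $ i"
    using assms unfolding S posdef_orthogonal_conj_iff[OF P] posdef_diag_mat_iff .
  with P S show thesis using that by blast
qed

lemma posdef_det_pos:
  fixes A :: "real^'n^'n"
  assumes "posdef A"
  shows "0 < det A"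
proof -
  obtain P a where P: "orthogonal_matrix P" and A: "A = P ** diag_mat a ** transpose P"
    and pos: "\<And>i. 0 < a $ i"
    using posdef_diagonalization[OF assms] by blast
  show ?thesis
    using pos by (simp add: A det_orthogonal_conj[OF P] det_diag_mat prod_pos)
qed

lemma posdef_invertible: "posdef A \<Longrightarrow> invertible A"
  using posdef_det_pos invertible_det_nz by force

lemma posdef_midpoint:
  fixes A B :: "real^'n^'n"
  assumes "posdef A" "posdef B"
  shows "posdef ((1/2) *\<^sub>R (A + B))"
  unfolding posdef_def
proof (intro conjI allI impI)
  show "transpose ((1/2) *\<^sub>R (A + B)) = (1/2) *\<^sub>R (A + B)"
    using assms by (simp add: posdef_def transpose_scalar transpose_add)
  fix x :: "real^'n"
  assume "x \<noteq> 0"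
  thus "0 < x \<bullet> ((1/2) *\<^sub>R (A + B) *v x)"
    using assms by (simp add: posdef_def matrix_vector_mult_add_rdistrib inner_add_right add_pos_pos
        flip: scaleR_matrix_vector_assoc)
qed

lemma posdef_sqrt_ex1:
  fixes A :: "real^'n^'n"
  assumes "posdef A"
  shows "\<exists>!S. posdef S \<and> S ** S = A"
proof -
  obtain P a where P: "orthogonal_matrix P" and A: "A = P ** diag_mat a ** transpose P"
    and pos: "\<And>i. 0 < a $ i"
    using posdef_diagonalization[OF assms] by blast
  define r where "r = (\<chi> i. sqrt (a $ i))"
  have r_sq: "r * r = a" "(\<chi> i. (r $ i)\<^sup>2) = a"
    using pos by (simp_all add: r_def vec_eq_iff less_imp_le)
  show ?thesis
  proof
    show "posdef (P ** diag_mat r ** transpose P) \<and>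
      (P ** diag_mat r ** transpose P) ** (P ** diag_mat r ** transpose P) = A"
      using pos by (simp add: A r_def posdef_orthogonal_conj_iff[OF P] posdef_diag_mat_iff
          orthogonal_conj_mult[OF P] diag_mat_mult r_sq(1)[unfolded r_def])
  next
    fix S
    assume "posdef S \<and> S ** S = A"
    hence "posdef S" and SS: "S ** S = A" by auto
    from \<open>posdef S\<close> obtain Q s where Q: "orthogonal_matrix Q"
      and S: "S = Q ** diag_mat s ** transpose Q" and s_pos: "\<And>i. 0 < s $ i"
      by (rule posdef_diagonalization) blast
    show "S = P ** diag_mat r ** transpose P"
      unfolding S
    proof (rule orthogonal_conj_diag_eq_if_map_eq[OF Q P, where f = "\<lambda>x. x\<^sup>2"])
      fix i j
      assume "(s $ i)\<^sup>2 = (r $ j)\<^sup>2"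
      thus "s $ i = r $ j"
        using s_pos[of i] pos[of j] by (simp add: r_def real_sqrt_unique less_imp_le)
    next
      have "(\<chi> i. (s $ i)\<^sup>2) = s * s"
        by (simp add: vec_eq_iff power2_eq_square)
      thus "Q ** diag_mat (\<chi> i. (s $ i)\<^sup>2) ** transpose Q
          = P ** diag_mat (\<chi> i. (r $ i)\<^sup>2) ** transpose P"
        using SS by (simp add: S A r_sq(2) orthogonal_conj_mult[OF Q] diag_mat_mult)
    qed
  qed
qed

lemma msqrt:
  fixes A :: "real^'n^'n"
  assumes "posdef A"
  shows "posdef (msqrt A)" "msqrt A ** msqrt A = A"
  using theI'[OF posdef_sqrt_ex1[OF assms]] by (simp_all add: msqrt_def)

lemma minvsqrt:
  fixes A :: "real^'n^'n"
  assumes "posdef A"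
  shows "msqrt A ** minvsqrt A = mat 1" "minvsqrt A ** msqrt A = mat 1"
    "transpose (minvsqrt A) = minvsqrt A"
proof -
  have "invertible (msqrt A)" and "transpose (msqrt A) = msqrt A"
    using msqrt(1)[OF assms] by (simp_all add: posdef_invertible posdef_def)
  thus "msqrt A ** minvsqrt A = mat 1" "minvsqrt A ** msqrt A = mat 1"
    "transpose (minvsqrt A) = minvsqrt A"
    by (simp_all add: minvsqrt_def matrix_inv symmetric_matrix_inv)
qed

lemma mlog_orthogonal_conj_diag:
  fixes Q :: "real^'n^'n"
  assumes Q: "orthogonal_matrix Q"
  shows "mlog (Q ** diag_mat (\<chi> i. exp (t $ i)) ** transpose Q) = Q ** diag_mat t ** transpose Q"
  unfolding mlog_def
proof (rule the_equality)
  show "transpose (Q ** diag_mat t ** transpose Q) = Q ** diag_mat t ** transpose Q \<and>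
        mexp (Q ** diag_mat t ** transpose Q) = Q ** diag_mat (\<chi> i. exp (t $ i)) ** transpose Q"
    by (simp add: matrix_transpose_mul matrix_mul_assoc mexp_orthogonal_conj_diag[OF Q])
  fix L
  assume L: "transpose L = L \<and> mexp L = Q ** diag_mat (\<chi> i. exp (t $ i)) ** transpose Q"
  then obtain R u where R: "orthogonal_matrix R" and L_eq: "L = R ** diag_mat u ** transpose R"
    using symmetric_matrix_orthogonal_diagonalization by blast
  have "R ** diag_mat (\<chi> i. exp (u $ i)) ** transpose R
      = Q ** diag_mat (\<chi> i. exp (t $ i)) ** transpose Q"
    using L by (simp only: L_eq mexp_orthogonal_conj_diag[OF R])
  thus "L = Q ** diag_mat t ** transpose Q"
    unfolding L_eq by (rule orthogonal_conj_diag_eq_if_map_eq[OF R Q, rotated]) simp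
qed

section \<open>Comparing the two divergences\<close>

lemma ln_one_plus_exp_half_le:
  fixes t :: real
  shows "ln ((1 + exp t) / 2) - t / 2 \<le> t\<^sup>2 / 8"
proof -
  \<comment> \<open>The left-hand side is ln cosh (t / 2), an even function of t; for t \<ge> 0 the bound is
    Hoeffding's lemma for a fair coin.\<close>
  have "ln ((1 + exp \<bar>t\<bar>) / 2) - \<bar>t\<bar> / 2 \<le> \<bar>t\<bar>\<^sup>2 / 8"
    using Hoeffdings_lemma_aux[of "\<bar>t\<bar>" "1/2"] by (simp add: field_simps)
  moreover have "ln ((1 + exp t) / 2) - t / 2 = ln ((1 + exp (-t)) / 2) + t / 2"
  proof -
    have "ln ((1 + exp t) / 2) = ln (exp t * ((1 + exp (-t)) / 2))"
      by (rule arg_cong[where f = ln]) (simp add: exp_minus field_simps)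
    also have "\<dots> = ln (exp t) + ln ((1 + exp (-t)) / 2)"
      by (rule ln_mult_pos) (simp_all add: add_pos_pos)
    finally show ?thesis by simp
  qed
  ultimately show ?thesis by (cases "t \<ge> 0") (auto simp: abs_if)
qed

lemma deltaS2_congruence:
  fixes M A B :: "real^'n^'n"
  assumes "invertible M" "posdef A" "posdef B"
  shows "deltaS2 (M ** A ** transpose M) (M ** B ** transpose M) = deltaS2 A B"
proof -
  have AB: "0 < det ((1/2) *\<^sub>R (A + B))" "0 < det (A ** B)"
    using assms by (simp_all add: posdef_det_pos posdef_midpoint det_mul)
  define d where "d = (det M)\<^sup>2"
  have "0 < d" using assms(1) by (simp add: d_def invertible_det_nz)
  have "(1/2) *\<^sub>R (M ** A ** transpose M + M ** B ** transpose M)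
      = M ** ((1/2) *\<^sub>R (A + B)) ** transpose M"
    by (simp add: matrix_add_ldistrib matrix_add_rdistrib matrix_scalar_ac scalar_matrix_assoc
        scaleR_right_distrib)
  hence half: "det ((1/2) *\<^sub>R (M ** A ** transpose M + M ** B ** transpose M))
      = d * det ((1/2) *\<^sub>R (A + B))"
    by (simp add: det_mul d_def power2_eq_square)
  have prod: "det ((M ** A ** transpose M) ** (M ** B ** transpose M)) = d\<^sup>2 * det (A ** B)"
    by (simp add: det_mul d_def power2_eq_square)
  show ?thesis
    unfolding deltaS2_def half prod
    using \<open>0 < d\<close> AB by (simp add: ln_mult ln_realpow field_simps)
qed

lemma deltaS2_diag_mat:
  fixes a b :: "real^'n"
  assumes a: "\<And>i. 0 < a $ i" and b: "\<And>i. 0 < b $ i"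
  shows "deltaS2 (diag_mat a) (diag_mat b)
    = (\<Sum>i\<in>UNIV. ln ((a $ i + b $ i) / 2) - ln (a $ i * b $ i) / 2)"
proof -
  have "(1/2) *\<^sub>R (diag_mat a + diag_mat b) = diag_mat (\<chi> i. (a $ i + b $ i) / 2)"
    by (simp add: diag_mat_def vec_eq_iff)
  moreover have "diag_mat a ** diag_mat b = diag_mat (a * b)" by (rule diag_mat_mult)
  moreover have "(a $ i + b $ i) / 2 \<noteq> 0" "a $ i * b $ i \<noteq> 0" for i
    using a[of i] b[of i] by auto
  ultimately show ?thesis
    by (simp add: deltaS2_def det_diag_mat ln_prod sum_subtractf sum_divide_distrib)
qed

lemma posdef_whitened:
  fixes A B :: "real^'n^'n"
  assumes "posdef A" "posdef B"
  shows "posdef (minvsqrt A ** B ** minvsqrt A)"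
proof -
  have "invertible (minvsqrt A)"
    using minvsqrt(1,2)[OF assms(1)] by (auto simp: invertible_def)
  thus ?thesis
    using posdef_congruence[OF assms(2)] minvsqrt(3)[OF assms(1)] by metis
qed

lemma deltaR_eq_norm_log_eigenvalues:
  fixes Q :: "real^'n^'n"
  assumes "orthogonal_matrix Q"
    and "minvsqrt A ** B ** minvsqrt A = Q ** diag_mat (\<chi> i. exp (t $ i)) ** transpose Q"
  shows "deltaR A B = norm t"
  unfolding deltaR_def assms(2)
  by (simp add: mlog_orthogonal_conj_diag[OF assms(1)] norm_orthogonal_conj[OF assms(1)] norm_diag_mat)

lemma deltaS2_eq_sum_log_eigenvalues:
  fixes A B Q :: "real^'n^'n"
  assumes A: "posdef A" and Q: "orthogonal_matrix Q"
    and X: "minvsqrt A ** B ** minvsqrt A = Q ** diag_mat (\<chi> i. exp (t $ i)) ** transpose Q"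
  shows "deltaS2 A B = (\<Sum>i\<in>UNIV. ln ((1 + exp (t $ i)) / 2) - t $ i / 2)"
proof -
  define S where "S = msqrt A"
  define W where "W = minvsqrt A"
  have SW: "S ** W = mat 1" "W ** S = mat 1"
    using minvsqrt[OF A] by (simp_all add: S_def W_def)
  have S_sym: "transpose S = S"
    using msqrt(1)[OF A] by (simp add: S_def posdef_def)
  define M where "M = S ** Q"
  have "invertible S" using SW by (auto simp: invertible_def)
  hence "invertible M"
    unfolding M_def using invertible_orthogonal_matrix[OF Q] by (rule invertible_mult)
  have M_conj: "M ** D ** transpose M = S ** (Q ** D ** transpose Q) ** S" for D
    by (simp add: M_def matrix_transpose_mul S_sym matrix_mul_assoc)
  have "M ** diag_mat 1 ** transpose M = S ** S"
    using Q by (simp only: M_conj diag_mat_one) (simp add: orthogonal_matrix_def)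
  hence "A = M ** diag_mat 1 ** transpose M"
    using msqrt(2)[OF A] by (simp add: S_def)
  moreover have "M ** diag_mat (\<chi> i. exp (t $ i)) ** transpose M = (S ** W) ** B ** (W ** S)"
    by (simp add: M_conj W_def X[symmetric] matrix_mul_assoc)
  hence "B = M ** diag_mat (\<chi> i. exp (t $ i)) ** transpose M"
    by (simp add: SW)
  ultimately have "deltaS2 A B = deltaS2 (diag_mat 1) (diag_mat (\<chi> i. exp (t $ i)))"
    by (simp add: deltaS2_congruence \<open>invertible M\<close> posdef_diag_mat_iff)
  thus ?thesis by (simp add: deltaS2_diag_mat)
qed

lemma deltaS2_le_deltaR_sq:
  fixes A B :: "real^'n^'n"
  assumes "posdef A" "posdef B"
  shows "deltaS2 A B \<le> (deltaR A B)\<^sup>2 / 8"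
proof -
  obtain Q x where Q: "orthogonal_matrix Q"
    and X: "minvsqrt A ** B ** minvsqrt A = Q ** diag_mat x ** transpose Q"
    and x_pos: "\<And>i. 0 < x $ i"
    using posdef_diagonalization[OF posdef_whitened[OF assms]] by blast
  define t where "t = (\<chi> i. ln (x $ i))"
  have "(\<chi> i. exp (t $ i)) = x"
    using x_pos by (simp add: t_def vec_eq_iff)
  with X have X_exp: "minvsqrt A ** B ** minvsqrt A = Q ** diag_mat (\<chi> i. exp (t $ i)) ** transpose Q"
    by simp
  have "deltaS2 A B = (\<Sum>i\<in>UNIV. ln ((1 + exp (t $ i)) / 2) - t $ i / 2)"
    by (rule deltaS2_eq_sum_log_eigenvalues[OF assms(1) Q X_exp])
  also have "\<dots> \<le> (\<Sum>i\<in>UNIV. (t $ i)\<^sup>2 / 8)"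
    by (intro sum_mono ln_one_plus_exp_half_le)
  also have "\<dots> = (deltaR A B)\<^sup>2 / 8"
    by (simp add: deltaR_eq_norm_log_eigenvalues[OF Q X_exp] norm_vec_def L2_set_def sum_nonneg
        sum_divide_distrib)
  finally show ?thesis .
qed

theorem mainTheorem5:
  fixes \<Sigma> :: "real^'n^'n" and \<alpha> C :: real
  assumes "posdef \<Sigma>" and "\<alpha> > 0" and "C \<ge> \<alpha> / 8"
  shows "ballR \<Sigma> \<alpha> \<subseteq> ballS \<Sigma> (C * \<alpha>)"
proof
  fix A
  assume "A \<in> ballR \<Sigma> \<alpha>"
  hence A: "posdef A" and "deltaR A \<Sigma> \<le> \<alpha>" by (auto simp: ballR_def)
  have "deltaS2 A \<Sigma> \<le> (deltaR A \<Sigma>)\<^sup>2 / 8"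
    using A assms(1) by (rule deltaS2_le_deltaR_sq)
  also have "\<dots> \<le> \<alpha>\<^sup>2 / 8"
    using \<open>deltaR A \<Sigma> \<le> \<alpha>\<close> by (simp add: deltaR_def power_mono)
  also have "\<dots> \<le> C * \<alpha>"
    using assms(2,3) by (simp add: power2_eq_square mult_right_mono)
  finally show "A \<in> ballS \<Sigma> (C * \<alpha>)"
    using A by (simp add: ballS_def)
qed

end
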